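(* As $t\to+\infty$, $$f(t,1/e)\sim\left(\frac{\pi t}{2}\right)^{1/2}e^{t},$$ where $f(t,a)=t\int_0^1(ax)^{-tx}\,dx$.
   Context: For real $a>0$ and real $t$, $f(t,a)=t\int_0^1 (ax)^{-tx}\,dx$, where $(ax)^{-tx}=\exp(-tx\ln(ax))$ for $x\in(0,1]$. The notation $g\sim h$ means $g/h\to1$. *)

theory Defs
  imports "HOL-Analysis.Analysis" "HOL-Library.Landau_Symbols"
begin

text \<open>f(t,a) = t * integral over [0,1] of (a x)^(-t x) = exp(-t x ln(a x)).
  The value of the integrand at x = 0 is irrelevant (null set).\<close>
definition f :: "real \<Rightarrow> real \<Rightarrow> real" where
  "f t a = t * integral {0..1} (\<lambda>x. exp (- t * x * ln (a * x)))"

end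

(*
  Laplace's method. Since (x/e)^(-t x) = e^t exp (-t phase x) with phase x = 1 - x + x ln x,
  and phase vanishes on [0,1] only at x = 1, to second order (phase'' x = 1/x), one has
  (1 - x)^2/2 <= phase x <= (1 - x)^2/(2c) on [c,1]. The integral of exp (-t phase) is thus
  squeezed between Gaussian integrals: the upper one is at most sqrt (pi/(2t)), and the lower
  one, taken over [c,1] with c = 1 - t^(-1/4), is asymptotic to sqrt (pi/(2t)).
*)
theory Submission
  imports Defs "HOL-Probability.Distributions" "HOL-Real_Asymp.Real_Asymp"
begin

definition phase :: "real \<Rightarrow> real" where
  "phase x = 1 - x + x * ln x"

lemma integrand_eq_exp_phase:
  assumes "0 \<le> x"
  shows "exp (- t * x * ln (1 / exp 1 * x)) = exp t * exp (- t * phase x)"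
proof (cases "x = 0")
  case True
  then show ?thesis by (simp add: phase_def flip: exp_add)
next
  case False
  with assms have ln_eq: "ln (1 / exp 1 * x) = ln x - 1"
    by (simp add: ln_mult ln_div)
  have "- t * x * ln (1 / exp 1 * x) = t + - t * phase x"
    unfolding ln_eq phase_def by (simp add: algebra_simps)
  then show ?thesis by (simp flip: exp_add)
qed

lemma phase_ge_square:
  assumes "0 \<le> x" "x \<le> 1"
  shows "(1 - x)\<^sup>2 / 2 \<le> phase x"
proof (cases "x = 0")
  case True
  then show ?thesis by (simp add: phase_def)
next
  case False
  define p where "p y = phase y - (1 - y)\<^sup>2 / 2" for y
  have "p 1 \<le> p x"
  proof (rule DERIV_nonpos_imp_nonincreasing[OF assms(2)])
    fix y assume "x \<le> y" "y \<le> 1"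
    with assms False have "y > 0" by simp
    then have "DERIV p y :> ln y + (1 - y)"
      unfolding p_def [abs_def] phase_def
      by (auto intro!: derivative_eq_intros simp: field_simps power2_eq_square)
    moreover have "ln y + (1 - y) \<le> 0"
      using ln_le_minus_one[OF \<open>y > 0\<close>] by simp
    ultimately show "\<exists>d. DERIV p y :> d \<and> d \<le> 0" by blast
  qed
  then show ?thesis by (simp add: p_def phase_def)
qed

lemma phase_le_square:
  assumes "0 < c" "c \<le> x" "x \<le> 1"
  shows "phase x \<le> (1 - x)\<^sup>2 / (2 * c)"
proof -
  define p where "p y = (1 - y)\<^sup>2 / (2 * c) - phase y" for y
  have "p 1 \<le> p x"
  proof (rule DERIV_nonpos_imp_nonincreasing[OF assms(3)])
    fix y assume y: "x \<le> y" "y \<le> 1"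
    with assms have "y > 0" by simp
    then have "DERIV p y :> - ((1 - y) / c) - ln y"
      unfolding p_def [abs_def] phase_def
      using \<open>c > 0\<close> by (auto intro!: derivative_eq_intros simp: field_simps power2_eq_square)
    moreover have "- ln y \<le> (1 - y) / c"
    proof -
      have "- ln y \<le> 1 / y - 1"
        using ln_le_minus_one[of "1 / y"] \<open>y > 0\<close> by (simp add: ln_div)
      also have "\<dots> = (1 - y) / y"
        using \<open>y > 0\<close> by (simp add: field_simps)
      also have "\<dots> \<le> (1 - y) / c"
        using y assms by (intro divide_left_mono) auto
      finally show ?thesis .
    qed
    ultimately show "\<exists>d. DERIV p y :> d \<and> d \<le> 0"
      by (intro exI[of _ "- ((1 - y) / c) - ln y"]) simp
  qed
  then show ?thesis by (simp add: p_def phase_def)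
qed

lemma continuous_on_phase: "continuous_on {0..} phase"
proof -
  have "continuous (at x within {0..}) phase" if "x \<ge> 0" for x
  proof (cases "x = 0")
    case True
    have "(phase \<longlongrightarrow> phase 0) (at_right 0)"
      unfolding phase_def by real_asymp
    then show ?thesis
      using True by (simp add: continuous_within at_within_Ici_at_right)
  next
    case False
    with that have "isCont phase x"
      unfolding phase_def by (auto intro!: continuous_intros)
    then show ?thesis
      using continuous_at_imp_continuous_at_within by blast
  qed
  then show ?thesis
    using continuous_on_eq_continuous_within by auto
qed

definition gauss_partial :: "real \<Rightarrow> real" where
  "gauss_partial R = integral {0..R} (\<lambda>v. exp (- v\<^sup>2))"

lemma gauss_partial_tendsto: "(gauss_partial \<longlongrightarrow> sqrt pi / 2) at_top"
proof -
  note gaussian = has_bochner_integral_iff[THEN iffD1, OF gaussian_moment_0]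
  have "((\<lambda>R. \<integral>x. indicator {..R} x *\<^sub>R (indicator {0..} x *\<^sub>R exp (- x\<^sup>2)) \<partial>lborel)
          \<longlongrightarrow> sqrt pi / 2) at_top"
    using tendsto_integral_at_top[OF sets_lborel conjunct1[OF gaussian]]
    unfolding conjunct2[OF gaussian] .
  moreover have "(\<integral>x. indicator {..R} x *\<^sub>R (indicator {0..} x *\<^sub>R exp (- x\<^sup>2)) \<partial>lborel)
      = gauss_partial R" for R :: real
  proof -
    have integrable: "set_integrable lborel {0..R} (\<lambda>x::real. exp (- x\<^sup>2))"
      unfolding set_integrable_def
      by (rule borel_integrable_compact) (auto intro!: continuous_intros)
    have "(\<lambda>x::real. indicator {..R} x *\<^sub>R (indicator {0..} x *\<^sub>R exp (- x\<^sup>2)))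
        = (\<lambda>x. indicator {0..R} x *\<^sub>R exp (- x\<^sup>2))"
      by (rule ext) (simp split: split_indicator)
    then show ?thesis
      using set_borel_integral_eq_integral(2)[OF integrable]
      by (simp add: gauss_partial_def set_lebesgue_integral_def)
  qed
  ultimately show ?thesis by simp
qed

lemma gauss_partial_mono:
  assumes "0 \<le> a" "a \<le> b"
  shows "gauss_partial a \<le> gauss_partial b"
  unfolding gauss_partial_def using assms
  by (intro integral_subset_le integrable_continuous_interval continuous_intros) auto

lemma gauss_partial_le:
  assumes "0 \<le> R"
  shows "gauss_partial R \<le> sqrt pi / 2"
proof (rule tendsto_lowerbound[OF gauss_partial_tendsto])
  show "\<forall>\<^sub>F x in at_top. gauss_partial R \<le> gauss_partial x"
    using eventually_ge_at_top[of R]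
    by eventually_elim (use assms gauss_partial_mono in auto)
qed simp

lemma integral_gaussian_bump:
  assumes "k > 0" "L \<ge> 0"
  shows "integral {a - L..a} (\<lambda>x. exp (- k * (a - x)\<^sup>2)) = gauss_partial (L * sqrt k) / sqrt k"
proof -
  have "((\<lambda>v. exp (- (- v)\<^sup>2)) has_integral gauss_partial (L * sqrt k)) {- (L * sqrt k)..- 0}"
    unfolding gauss_partial_def
    by (rule has_integral_reflect_real[THEN iffD2])
      (intro integrable_integral integrable_continuous_interval continuous_intros)
  then have "((\<lambda>v. exp (- v\<^sup>2)) has_integral gauss_partial (L * sqrt k)) (cbox (- (L * sqrt k)) 0)"
    by simp
  from has_integral_affinity'[OF this, of "sqrt k" "- a * sqrt k"]
  have "((\<lambda>x. exp (- (sqrt k * x - a * sqrt k)\<^sup>2)) has_integral gauss_partial (L * sqrt k) / sqrt k)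
          {(- (L * sqrt k) + a * sqrt k) / sqrt k..(a * sqrt k) / sqrt k}"
    using assms by (simp add: divide_inverse_commute)
  moreover have "(sqrt k * x - a * sqrt k)\<^sup>2 = k * (a - x)\<^sup>2" for x
  proof -
    have "sqrt k * x - a * sqrt k = sqrt k * (x - a)" by (simp add: algebra_simps)
    then show ?thesis using assms by (simp add: power_mult_distrib power2_commute)
  qed
  moreover have "(- (L * sqrt k) + a * sqrt k) / sqrt k = a - L" "(a * sqrt k) / sqrt k = a"
    using assms by (simp_all add: field_simps)
  ultimately show ?thesis
    by (simp add: integral_unique)
qed

definition laplace_integral :: "real \<Rightarrow> real" where
  "laplace_integral t = integral {0..1} (\<lambda>x. exp (- t * phase x))"

lemma f_inv_e_eq: "f t (1 / exp 1) = t * exp t * laplace_integral t"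
proof -
  have "integral {0..1} (\<lambda>x. exp (- t * x * ln (1 / exp 1 * x)))
      = integral {0..1} (\<lambda>x. exp t * exp (- t * phase x))"
    by (intro integral_cong integrand_eq_exp_phase) simp
  then show ?thesis
    by (simp add: f_def laplace_integral_def)
qed

lemma integrable_exp_phase:
  assumes "0 \<le> a"
  shows "(\<lambda>x. exp (- t * phase x)) integrable_on {a..b}"
proof -
  have "continuous_on {a..b} phase"
    using continuous_on_subset[OF continuous_on_phase] assms by auto
  then show ?thesis
    by (intro integrable_continuous_interval continuous_intros)
qed

lemma laplace_integral_le:
  assumes "t > 0"
  shows "laplace_integral t \<le> sqrt (pi / (2 * t))"
proof -
  have "laplace_integral t \<le> integral {0..1} (\<lambda>x. exp (- (t / 2) * (1 - x)\<^sup>2))"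
    unfolding laplace_integral_def
  proof (intro integral_le integrable_exp_phase)
    show "(\<lambda>x. exp (- (t / 2) * (1 - x)\<^sup>2)) integrable_on {0..1}"
      by (intro integrable_continuous_interval continuous_intros)
    fix x :: real assume "x \<in> {0..1}"
    then have "t * ((1 - x)\<^sup>2 / 2) \<le> t * phase x"
      using assms by (intro mult_left_mono phase_ge_square) auto
    then show "exp (- t * phase x) \<le> exp (- (t / 2) * (1 - x)\<^sup>2)" by simp
  qed simp
  also have "\<dots> = gauss_partial (sqrt (t / 2)) / sqrt (t / 2)"
    using integral_gaussian_bump[of "t / 2" 1 1] assms by simp
  also have "\<dots> \<le> (sqrt pi / 2) / sqrt (t / 2)"
    using assms by (intro divide_right_mono gauss_partial_le) auto
  also have "\<dots> = sqrt (pi / (2 * t))"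
    using assms by (simp add: real_sqrt_divide real_sqrt_mult field_simps)
  finally show ?thesis .
qed

lemma laplace_integral_ge:
  assumes "t > 0" "0 < c" "c < 1"
  shows "gauss_partial ((1 - c) * sqrt (t / (2 * c))) / sqrt (t / (2 * c)) \<le> laplace_integral t"
proof -
  have "gauss_partial ((1 - c) * sqrt (t / (2 * c))) / sqrt (t / (2 * c))
      = integral {c..1} (\<lambda>x. exp (- (t / (2 * c)) * (1 - x)\<^sup>2))"
    using integral_gaussian_bump[of "t / (2 * c)" "1 - c" 1] assms by simp
  also have "\<dots> \<le> integral {c..1} (\<lambda>x. exp (- t * phase x))"
  proof (intro integral_le integrable_exp_phase)
    show "(\<lambda>x. exp (- (t / (2 * c)) * (1 - x)\<^sup>2)) integrable_on {c..1}"
      by (intro integrable_continuous_interval continuous_intros)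
    fix x :: real assume "x \<in> {c..1}"
    then have "t * phase x \<le> t * ((1 - x)\<^sup>2 / (2 * c))"
      using assms by (intro mult_left_mono phase_le_square) auto
    then show "exp (- (t / (2 * c)) * (1 - x)\<^sup>2) \<le> exp (- t * phase x)" by simp
  qed (use assms in auto)
  also have "\<dots> \<le> laplace_integral t"
    unfolding laplace_integral_def
    using assms by (intro integral_subset_le integrable_exp_phase) auto
  finally show ?thesis .
qed

lemma laplace_integral_asymp: "laplace_integral \<sim>[at_top] (\<lambda>t. sqrt (pi / (2 * t)))"
proof (rule asymp_equivI')
  \<comment> \<open>c tends to 1, but slowly enough that the Gaussian window (1 - c) sqrt (t/(2c)) still grows\<close>
  define c :: "real \<Rightarrow> real" where "c t = 1 - t powr (- 1 / 4)" for t
  define lower where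
    "lower t = 2 * sqrt (c t) / sqrt pi * gauss_partial ((1 - c t) * sqrt (t / (2 * c t)))" for t
  have "filterlim (\<lambda>t. (1 - c t) * sqrt (t / (2 * c t))) at_top at_top"
    unfolding c_def by real_asymp
  then have "((\<lambda>t. gauss_partial ((1 - c t) * sqrt (t / (2 * c t)))) \<longlongrightarrow> sqrt pi / 2) at_top"
    by (rule filterlim_compose[OF gauss_partial_tendsto])
  moreover have "((\<lambda>t. sqrt (c t)) \<longlongrightarrow> 1) at_top"
    unfolding c_def by real_asymp
  ultimately have "(lower \<longlongrightarrow> 2 * 1 / sqrt pi * (sqrt pi / 2)) at_top"
    unfolding lower_def by (intro tendsto_mult tendsto_divide tendsto_const) auto
  then have lower_tendsto: "(lower \<longlongrightarrow> 1) at_top" by simp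
  have lower_le: "\<forall>\<^sub>F t in at_top. lower t \<le> laplace_integral t / sqrt (pi / (2 * t))"
    using eventually_gt_at_top[of 1]
  proof eventually_elim
    case (elim t)
    then have c: "0 < c t" "c t < 1"
      by (simp_all add: c_def powr_less_one)
    have "sqrt (t / (2 * c t)) * sqrt (pi / (2 * t)) = sqrt (pi / (4 * c t))"
      using elim c by (simp flip: real_sqrt_mult add: field_simps)
    also have "\<dots> = sqrt pi / (2 * sqrt (c t))"
      using c by (simp add: real_sqrt_divide real_sqrt_mult)
    finally have "lower t = gauss_partial ((1 - c t) * sqrt (t / (2 * c t)))
                      / (sqrt (t / (2 * c t)) * sqrt (pi / (2 * t)))"
      using c by (simp add: lower_def)
    also have "\<dots> = gauss_partial ((1 - c t) * sqrt (t / (2 * c t))) / sqrt (t / (2 * c t))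
                      / sqrt (pi / (2 * t))"
      by (rule divide_divide_eq_left[symmetric])
    also have "\<dots> \<le> laplace_integral t / sqrt (pi / (2 * t))"
      using elim c by (intro divide_right_mono laplace_integral_ge) auto
    finally show ?case .
  qed
  have le_one: "\<forall>\<^sub>F t in at_top. laplace_integral t / sqrt (pi / (2 * t)) \<le> 1"
    using eventually_gt_at_top[of 0]
  proof eventually_elim
    case (elim t)
    then show ?case
      using laplace_integral_le[OF elim] by (simp add: divide_le_eq_1)
  qed
  show "((\<lambda>t. laplace_integral t / sqrt (pi / (2 * t))) \<longlongrightarrow> 1) at_top"
    by (rule tendsto_sandwich[OF lower_le le_one lower_tendsto tendsto_const])
qed

theorem mainTheorem4:
  shows "(\<lambda>t. f t (1 / exp 1)) \<sim>[at_top] (\<lambda>t. sqrt (pi * t / 2) * exp t)"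
proof -
  have "(\<lambda>t. t * exp t * laplace_integral t) \<sim>[at_top] (\<lambda>t. t * exp t * sqrt (pi / (2 * t)))"
    by (intro asymp_equiv_intros laplace_integral_asymp)
  also have "\<dots> \<sim>[at_top] (\<lambda>t. sqrt (pi * t / 2) * exp t)"
    using eventually_gt_at_top[of 0]
    by (rule asymp_equiv_refl_ev[OF eventually_mono])
      (simp add: real_sqrt_divide real_sqrt_mult field_simps)
  finally show ?thesis
    unfolding f_inv_e_eq .
qed

end
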